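(* Let $\mathbb{F}\subseteq\mathbb{C}$ be a subfield closed under complex conjugation, let $m\ge 1$, $N\ge1$, and let $\mathbf{A}(z)=\sum_{k=0}^N A_kz^k$ with $A_k\in\mathbb{F}^{m\times m}$ and $A_N\neq 0$ satisfy $\mathbf{A}(z)\widetilde{\mathbf{A}}(z)=I_m$ for all $z\in\mathbb{C}\setminus\{0\}$, where $\widetilde{\mathbf{A}}(z)=\sum_{k=0}^N A_k^*z^{-k}$. Then $\det\mathbf{A}(z)=c\,z^d$ for some constant $c\ne0$ and integer $d\ge0$, and: (a) $d\ge N$; (b) $d=N$ if and only if $\operatorname{rank}(A_0)=m-1$.
   Context: $A^*$ denotes the conjugate transpose of a matrix $A$. *)

theory Defs
  imports "HOL-Analysis.Analysis"
begin

definition cmat_adj :: "complex^'n^'m \<Rightarrow> complex^'m^'n" where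
  "cmat_adj A = (\<chi> i j. cnj (A $ j $ i))"

definition is_subfield :: "complex set \<Rightarrow> bool" where
  "is_subfield F \<longleftrightarrow> 0 \<in> F \<and> 1 \<in> F \<and>
     (\<forall>x\<in>F. \<forall>y\<in>F. x + y \<in> F \<and> x * y \<in> F) \<and>
     (\<forall>x\<in>F. - x \<in> F \<and> inverse x \<in> F)"

definition mpoly_eval :: "(nat \<Rightarrow> complex^'m^'m) \<Rightarrow> nat \<Rightarrow> complex \<Rightarrow> complex^'m^'m" where
  "mpoly_eval A N z = (\<chi> i j. \<Sum>k\<le>N. A k $ i $ j * z ^ k)"

definition mpoly_tilde :: "(nat \<Rightarrow> complex^'m^'m) \<Rightarrow> nat \<Rightarrow> complex \<Rightarrow> complex^'m^'m" where
  "mpoly_tilde A N z = (\<chi> i j. \<Sum>k\<le>N. cmat_adj (A k) $ i $ j * inverse z ^ k)"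

end

theory Submission
  imports Defs "HOL-Computational_Algebra.Fundamental_Theorem_Algebra"
begin

text \<open>For z \<noteq> 0 the paraconjugate B(z) = \<Sum> A_k^* z^-k is the inverse of A(z), so det A(z)
is a polynomial without nonzero roots, hence c z^d. Moreover adj A(z) = det A(z) B(z), and
multiplying by z^N turns this into an identity z^N adj A(z) = c z^d R(z) between matrices that are
polynomial in z, where R(z) = z^N B(z) has R(0) = A_N^* \<noteq> 0. Comparing orders at z = 0: d < N
would force A_N^* = 0, and d = N exactly when adj A_0 \<noteq> 0, which for the singular matrix A_0
means rank A_0 = m - 1.\<close>

lemma poly_det:
  fixes M :: "'a::comm_ring_1 poly^'n^'n"
  shows "poly (det M) x = det (\<chi> i j. poly (M $ i $ j) x)"
  by (simp add: det_def poly_sum poly_prod)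

lemma poly_eq_monomial_if_nonzero_off_0:
  fixes p :: "complex poly"
  assumes "\<And>z. z \<noteq> 0 \<Longrightarrow> poly p z \<noteq> 0"
  obtains c d where "c \<noteq> 0" "\<And>z. poly p z = c * z ^ d"
proof -
  have "p \<noteq> 0" using assms[of 1] by auto
  then obtain q where p: "p = [:0, 1:] ^ order 0 p * q" and "\<not> [:0, 1:] dvd q"
    using order_decomp[of p 0] by auto
  then have "poly q 0 \<noteq> 0" by (simp add: poly_eq_0_iff_dvd)
  moreover have "poly q z \<noteq> 0" if "z \<noteq> 0" for z
    using assms[OF that] by (subst (asm) p) simp
  ultimately have "constant (poly q)"
    by (metis fundamental_theorem_of_algebra)
  then have "poly q z = poly q 0" for z
    unfolding constant_def by blast
  then have "poly p z = poly q 0 * z ^ order 0 p" for z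
    by (subst p) simp
  with \<open>poly q 0 \<noteq> 0\<close> show ?thesis using that by blast
qed

lemma isCont_det:
  fixes M :: "'a::t2_space \<Rightarrow> 'b::real_normed_field^'n^'n"
  assumes "\<And>i j. isCont (\<lambda>x. M x $ i $ j) x0"
  shows "isCont (\<lambda>x. det (M x)) x0"
  unfolding det_def by (intro continuous_intros assms)

definition adjugate :: "'a::comm_ring_1^'n^'n \<Rightarrow> 'a^'n^'n" where
  "adjugate A = (\<chi> i j. det (\<chi> r. if r = j then axis i 1 else row r A))"

lemma isCont_adjugate:
  fixes M :: "'a::t2_space \<Rightarrow> 'b::real_normed_field^'n^'n"
  assumes "\<And>i j. isCont (\<lambda>x. M x $ i $ j) x0"
  shows "isCont (\<lambda>x. adjugate (M x) $ i $ j) x0"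
  unfolding adjugate_def vec_lambda_beta
proof (rule isCont_det)
  show "isCont (\<lambda>x. (\<chi> r. if r = j then axis i 1 else row r (M x)) $ r $ s) x0" for r s
    by (cases "r = j") (simp_all add: row_def assms)
qed

lemma det_replace_row:
  fixes A :: "'a::comm_ring_1^'n^'n"
  shows "det (\<chi> r. if r = j then v else row r A) = (\<Sum>i\<in>UNIV. v $ i * adjugate A $ i $ j)"
proof -
  have "v = (\<Sum>i\<in>UNIV. v $ i *s axis i 1)"
    by (simp add: vec_eq_iff axis_def if_distrib cong: if_cong)
  then have "det (\<chi> r. if r = j then v else row r A)
      = det (\<chi> r. if r = j then \<Sum>i\<in>UNIV. v $ i *s axis i 1 else row r A)"
    by (rule arg_cong)
  also have "\<dots> = (\<Sum>i\<in>UNIV. det (\<chi> r. if r = j then v $ i *s axis i 1 else row r A))"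
    by (simp add: det_linear_row_sum)
  also have "\<dots> = (\<Sum>i\<in>UNIV. v $ i * adjugate A $ i $ j)"
    by (simp add: det_row_mul adjugate_def)
  finally show ?thesis .
qed

lemma matrix_mul_adjugate:
  fixes A :: "'a::comm_ring_1^'n^'n"
  shows "A ** adjugate A = mat (det A)"
proof -
  have "(A ** adjugate A) $ k $ j = det (\<chi> r. if r = j then row k A else row r A)" for k j
    by (simp add: matrix_matrix_mult_def det_replace_row row_def)
  moreover have "det (\<chi> r. if r = j then row k A else row r A) = (if k = j then det A else 0)"
    for k j :: 'n
  proof (cases "k = j")
    case True
    then have "(\<chi> r. if r = j then row k A else row r A) = A"
      by (simp add: row_def vec_eq_iff)
    with True show ?thesis by simp
  next
    case False
    then show ?thesis by (intro trans[OF det_identical_rows[of k j]]) (auto simp: row_def)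
  qed
  ultimately show ?thesis by (simp add: vec_eq_iff mat_def)
qed

lemma det_nonzero_iff_span_rows:
  fixes A :: "'a::field^'n^'n"
  shows "det A \<noteq> 0 \<longleftrightarrow> vec.span (rows A) = UNIV"
  by (metis invertible_det_nz invertible_def matrix_left_invertible_span_rows_gen
      matrix_left_right_inverse)

lemma rank_eq_card_iff_det_nonzero:
  fixes A :: "'a::field^'n^'n"
  shows "rank A = CARD('n) \<longleftrightarrow> det A \<noteq> 0"
  unfolding row_rank_def_gen det_nonzero_iff_span_rows vec.dim_eq_full[symmetric]
    vec.dimension_def card_cart_basis ..

lemma rank_ge_if_adjugate_nonzero:
  fixes A :: "'a::field^'n^'n"
  assumes "adjugate A \<noteq> 0"
  shows "CARD('n) - 1 \<le> rank A"
proof -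
  obtain i j where "det (\<chi> r. if r = j then axis i 1 else row r A) \<noteq> 0"
    using assms by (auto simp: adjugate_def vec_eq_iff)
  moreover define M where "M = (\<chi> r. if r = j then axis i 1 else row r A)"
  ultimately have "det M \<noteq> 0" by simp
  have row_M: "row r M = row r A" if "r \<noteq> j" for r
    using that by (simp add: M_def row_def)
  define S where "S = (\<lambda>r. row r A) ` (UNIV - {j})"
  have "inj_on (\<lambda>r. row r A) (UNIV - {j})"
  proof (rule inj_onI)
    fix r s assume "r \<in> UNIV - {j}" "s \<in> UNIV - {j}" "row r A = row s A"
    then show "r = s"
      using \<open>det M \<noteq> 0\<close> det_identical_rows[of r s M] row_M by auto
  qed
  then have "card S = CARD('n) - 1"
    by (simp add: S_def card_image card_Diff_singleton)
  have "S \<subseteq> rows M"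
  proof
    fix x assume "x \<in> S"
    then obtain r where "r \<noteq> j" "x = row r A"
      by (auto simp: S_def)
    then have "x = row r M"
      using row_M by simp
    then show "x \<in> rows M"
      by (auto simp: rows_def)
  qed
  then have "vec.independent S"
    using det_dependent_rows \<open>det M \<noteq> 0\<close> vec.independent_mono by blast
  moreover have "S \<subseteq> rows A"
    by (auto simp: S_def rows_def)
  ultimately have "card S \<le> rank A"
    by (simp add: row_rank_def_gen vec.independent_card_le_dim)
  with \<open>card S = CARD('n) - 1\<close> show ?thesis by simp
qed

lemma independent_rows_if_rank_ge:
  fixes A :: "'a::field^'n^'m"
  assumes "k \<le> rank A"
  obtains I where "card I = k" "inj_on (\<lambda>r. row r A) I" "vec.independent ((\<lambda>r. row r A) ` I)"
proof -
  obtain B where B: "B \<subseteq> rows A" "vec.independent B" "rows A \<subseteq> vec.span B"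
      "card B = vec.dim (rows A)"
    by (rule vec.basis_exists)
  then have "k \<le> card B"
    using assms by (simp add: row_rank_def_gen)
  then obtain B' where "B' \<subseteq> B" "card B' = k" "finite B'"
    by (rule obtain_subset_with_card_n)
  then have "B' \<subseteq> range (\<lambda>r. row r A)" and "vec.independent B'"
    using B(1,2) vec.independent_mono by (auto simp: rows_def)
  moreover obtain I where "inj_on (\<lambda>r. row r A) I" "B' = (\<lambda>r. row r A) ` I"
    using \<open>B' \<subseteq> range (\<lambda>r. row r A)\<close> unfolding subset_image_inj by blast
  ultimately show ?thesis
    using that \<open>card B' = k\<close> card_image by metis
qed

lemma adjugate_nonzero_if_rank_ge:
  fixes A :: "'a::field^'n^'n"
  assumes "CARD('n) - 1 \<le> rank A"
  shows "adjugate A \<noteq> 0"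
proof -
  obtain I where card_I: "card I = CARD('n) - 1" and I: "inj_on (\<lambda>r. row r A) I"
    and indep: "vec.independent ((\<lambda>r. row r A) ` I)"
    using independent_rows_if_rank_ge[OF assms] by blast
  define B where "B = (\<lambda>r. row r A) ` I"
  have card_B: "card B = CARD('n) - 1" and "finite B"
    using card_I I by (simp_all add: B_def card_image)
  have "I \<noteq> UNIV"
    using card_I zero_less_card_finite[where 'a = 'n] by (auto simp del: zero_less_card_finite)
  then obtain j where "j \<notin> I" by blast
  have "vec.span B \<noteq> UNIV"
  proof
    assume "vec.span B = UNIV"
    then have "CARD('n) = CARD('n) - 1"
      using vec.dim_span_eq_card_independent[of B] indep card_B vec_dim_card by (metis B_def)
    then show False
      using zero_less_card_finite[where 'a = 'n] by linarith
  qed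
  then obtain v where "v \<notin> vec.span B" by blast
  define M where "M = (\<chi> r. if r = j then v else row r A)"
  have row_M: "row j M = v" "\<And>r. r \<noteq> j \<Longrightarrow> row r M = row r A"
    by (simp_all add: M_def row_def vec_eq_iff)
  have "(\<lambda>r. row r M) ` I = B"
    unfolding B_def by (intro image_cong refl) (metis row_M(2) \<open>j \<notin> I\<close>)
  then have "insert v B \<subseteq> rows M"
    using row_M(1) by (auto simp: rows_def)
  moreover have "vec.independent (insert v B)"
    using \<open>v \<notin> vec.span B\<close> indep by (simp add: B_def vec.independent_insertI)
  moreover have "card (insert v B) = CARD('n)"
  proof -
    have "v \<notin> B"
      using \<open>v \<notin> vec.span B\<close> vec.span_base by blast
    then show ?thesis
      using \<open>finite B\<close> card_B zero_less_card_finite[where 'a = 'n] by simp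
  qed
  ultimately have "UNIV \<subseteq> vec.span (insert v B)"
    using vec.card_ge_dim_independent[of "insert v B" UNIV] by (simp add: card_cart_basis)
  then have "vec.span (rows M) = UNIV"
    using vec.span_mono[OF \<open>insert v B \<subseteq> rows M\<close>] by blast
  then have "(\<Sum>i\<in>UNIV. v $ i * adjugate A $ i $ j) \<noteq> 0"
    using det_nonzero_iff_span_rows[of M] by (simp add: M_def det_replace_row)
  then show ?thesis by auto
qed

lemma rank_eq_card_minus_1_iff:
  fixes A :: "'a::field^'n^'n"
  shows "rank A = CARD('n) - 1 \<longleftrightarrow> det A = 0 \<and> adjugate A \<noteq> 0"
proof
  assume "rank A = CARD('n) - 1"
  moreover have "rank A \<noteq> CARD('n)"
    using calculation zero_less_card_finite[where 'a = 'n] by linarith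
  ultimately show "det A = 0 \<and> adjugate A \<noteq> 0"
    using rank_eq_card_iff_det_nonzero[of A] adjugate_nonzero_if_rank_ge[of A] by simp
next
  assume "det A = 0 \<and> adjugate A \<noteq> 0"
  moreover have "rank A \<le> CARD('n)"
    by (simp add: row_rank_def_gen dim_subset_UNIV_cart_gen)
  ultimately show "rank A = CARD('n) - 1"
    using rank_eq_card_iff_det_nonzero[of A] rank_ge_if_adjugate_nonzero[of A] by linarith
qed

lemma power_mult_eq_at_0:
  fixes f g :: "'a::real_normed_field \<Rightarrow> 'a"
  assumes "isCont f 0" "isCont g 0" "\<And>z. z \<noteq> 0 \<Longrightarrow> z ^ a * f z = z ^ b * g z"
  shows "0 ^ (a - b) * f 0 = 0 ^ (b - a) * g 0"
proof -
  have le_case: "0 ^ (a - b) * f 0 = g 0"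
    if "isCont f 0" "isCont g 0" and eq: "\<And>z. z \<noteq> 0 \<Longrightarrow> z ^ a * f z = z ^ b * g z"
      and "b \<le> a"
    for a b and f g :: "'a \<Rightarrow> 'a"
  proof -
    have "z ^ (a - b) * f z = g z" if "z \<noteq> 0" for z
    proof -
      have "z ^ b * (z ^ (a - b) * f z) = z ^ b * g z"
        using \<open>b \<le> a\<close> eq[OF that] by (simp flip: mult.assoc power_add)
      with that show ?thesis by simp
    qed
    then have eventually_eq: "\<forall>\<^sub>F z in at 0. z ^ (a - b) * f z = g z"
      by (simp add: eventually_at_filter)
    have "((\<lambda>z. z ^ (a - b) * f z) \<longlongrightarrow> 0 ^ (a - b) * f 0) (at 0)"
      using \<open>isCont f 0\<close> by (intro tendsto_intros) (simp add: isCont_def)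
    then have "(g \<longlongrightarrow> 0 ^ (a - b) * f 0) (at 0)"
      using eventually_eq by (rule Lim_transform_eventually)
    with \<open>isCont g 0\<close> show ?thesis
      by (simp add: isCont_def LIM_unique)
  qed
  show ?thesis
  proof (cases "b \<le> a")
    case True
    then show ?thesis using le_case[OF assms] by simp
  next
    case False
    then show ?thesis using le_case[OF assms(2,1), of b a] assms(3) by (simp add: eq_commute)
  qed
qed

definition paraunitary :: "(nat \<Rightarrow> complex^'m^'m) \<Rightarrow> nat \<Rightarrow> bool" where
  "paraunitary A N \<longleftrightarrow> (\<forall>z. z \<noteq> 0 \<longrightarrow> mpoly_eval A N z ** mpoly_tilde A N z = mat 1)"

definition mpoly_matrix :: "(nat \<Rightarrow> complex^'m^'m) \<Rightarrow> nat \<Rightarrow> complex poly^'m^'m" where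
  "mpoly_matrix A N = (\<chi> i j. \<Sum>k\<le>N. monom (A k $ i $ j) k)"

text \<open>z^N times the paraconjugate: unlike \<open>mpoly_tilde\<close>, a polynomial in z, defined at z = 0.\<close>
definition mpoly_tilde_rev :: "(nat \<Rightarrow> complex^'m^'m) \<Rightarrow> nat \<Rightarrow> complex \<Rightarrow> complex^'m^'m" where
  "mpoly_tilde_rev A N z = (\<chi> i j. \<Sum>k\<le>N. cmat_adj (A k) $ i $ j * z ^ (N - k))"

lemma det_mpoly_eval: "det (mpoly_eval A N z) = poly (det (mpoly_matrix A N)) z"
  by (simp add: poly_det mpoly_matrix_def mpoly_eval_def poly_sum poly_monom)

lemma mpoly_eval_0 [simp]: "mpoly_eval A N 0 = A 0"
  by (simp add: mpoly_eval_def vec_eq_iff power_0_left if_distrib cong: if_cong)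

lemma mpoly_tilde_rev_0 [simp]: "mpoly_tilde_rev A N 0 = cmat_adj (A N)"
  by (simp add: mpoly_tilde_rev_def vec_eq_iff power_0_left if_distrib cong: if_cong)

lemma mpoly_tilde_rev_eq:
  assumes "z \<noteq> 0"
  shows "mpoly_tilde_rev A N z $ i $ j = z ^ N * mpoly_tilde A N z $ i $ j"
  unfolding mpoly_tilde_rev_def mpoly_tilde_def vec_lambda_beta sum_distrib_left
proof (rule sum.cong)
  show "cmat_adj (A k) $ i $ j * z ^ (N - k) = z ^ N * (cmat_adj (A k) $ i $ j * inverse z ^ k)"
    if "k \<in> {..N}" for k
    using that assms by (simp add: power_diff power_inverse field_simps)
qed simp

lemma isCont_mpoly_eval: "isCont (\<lambda>z. mpoly_eval A N z $ i $ j) z0"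
  unfolding mpoly_eval_def vec_lambda_beta by (intro continuous_intros)

lemma isCont_mpoly_tilde_rev: "isCont (\<lambda>z. mpoly_tilde_rev A N z $ i $ j) z0"
  unfolding mpoly_tilde_rev_def vec_lambda_beta by (intro continuous_intros)

lemma paraunitary_det_monomial:
  assumes "paraunitary A N"
  obtains c d where "c \<noteq> 0" "\<And>z. det (mpoly_eval A N z) = c * z ^ d"
proof -
  have "poly (det (mpoly_matrix A N)) z \<noteq> 0" if "z \<noteq> 0" for z
  proof -
    have "det (mpoly_eval A N z) * det (mpoly_tilde A N z) = 1"
      using assms that by (simp add: paraunitary_def flip: det_mul)
    then show ?thesis
      by (auto simp: det_mpoly_eval)
  qed
  then obtain c d where "c \<noteq> 0" "\<And>z. poly (det (mpoly_matrix A N)) z = c * z ^ d"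
    using poly_eq_monomial_if_nonzero_off_0 by blast
  then show ?thesis
    using that by (simp add: det_mpoly_eval)
qed

lemma paraunitary_adjugate:
  assumes "paraunitary A N" "z \<noteq> 0"
  shows "z ^ N * adjugate (mpoly_eval A N z) $ i $ j
    = det (mpoly_eval A N z) * mpoly_tilde_rev A N z $ i $ j"
proof -
  let ?P = "mpoly_eval A N z" and ?Q = "mpoly_tilde A N z"
  have "?Q ** ?P = mat 1"
    using assms matrix_left_right_inverse by (auto simp: paraunitary_def)
  then have "adjugate ?P = ?Q ** mat (det ?P)"
    by (metis matrix_mul_adjugate matrix_mul_assoc matrix_mul_lid)
  then have "adjugate ?P $ i $ j = det ?P * ?Q $ i $ j"
    by (simp add: matrix_matrix_mult_def mat_def mult.commute if_distrib cong: if_cong)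
  then show ?thesis
    by (simp add: mpoly_tilde_rev_eq[OF assms(2)] mult.left_commute)
qed

lemma paraunitary_adjugate_at_0:
  assumes "paraunitary A N" "\<And>z. det (mpoly_eval A N z) = c * z ^ d"
  shows "0 ^ (N - d) * adjugate (A 0) $ i $ j = 0 ^ (d - N) * (c * cmat_adj (A N) $ i $ j)"
proof -
  let ?f = "\<lambda>z. adjugate (mpoly_eval A N z) $ i $ j"
    and ?g = "\<lambda>z. c * mpoly_tilde_rev A N z $ i $ j"
  have "isCont ?f 0"
    by (intro isCont_adjugate isCont_mpoly_eval)
  moreover have "isCont ?g 0"
    by (intro isCont_mult continuous_const isCont_mpoly_tilde_rev)
  moreover have "z ^ N * ?f z = z ^ d * ?g z" if "z \<noteq> 0" for z
    using paraunitary_adjugate[OF assms(1) that] by (simp add: assms(2) mult_ac)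
  ultimately have "0 ^ (N - d) * ?f 0 = 0 ^ (d - N) * ?g 0"
    by (rule power_mult_eq_at_0)
  then show ?thesis by simp
qed

theorem lemma1:
  fixes F :: "complex set" and A :: "nat \<Rightarrow> complex^'m^'m" and N :: nat
  assumes "is_subfield F"
    and "\<forall>x\<in>F. cnj x \<in> F"
    and "N \<ge> 1"
    and "\<forall>k\<le>N. \<forall>i j. A k $ i $ j \<in> F"
    and "A N \<noteq> 0"
    and "\<forall>z. z \<noteq> 0 \<longrightarrow> mpoly_eval A N z ** mpoly_tilde A N z = mat 1"
  shows "\<exists>c::complex. \<exists>d::nat. c \<noteq> 0 \<and> (\<forall>z. z \<noteq> 0 \<longrightarrow> det (mpoly_eval A N z) = c * z ^ d)
           \<and> d \<ge> N \<and> (d = N \<longleftrightarrow> rank (A 0) = CARD('m) - 1)"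
proof -
  have "paraunitary A N" using assms(6) by (simp add: paraunitary_def)
  then obtain c d where "c \<noteq> 0" and det: "\<And>z. det (mpoly_eval A N z) = c * z ^ d"
    using paraunitary_det_monomial by blast
  note at_0 = paraunitary_adjugate_at_0[OF \<open>paraunitary A N\<close> det]
  obtain i j where "cmat_adj (A N) $ i $ j \<noteq> 0"
    using assms(5) by (auto simp: vec_eq_iff cmat_adj_def)
  then have "N \<le> d"
    using at_0[of i j] \<open>c \<noteq> 0\<close> by (cases "N \<le> d") (auto simp: power_0_left)
  moreover have "d = N \<longleftrightarrow> adjugate (A 0) \<noteq> 0"
  proof
    assume "d = N"
    then show "adjugate (A 0) \<noteq> 0"
      using at_0[of i j] \<open>c \<noteq> 0\<close> \<open>cmat_adj (A N) $ i $ j \<noteq> 0\<close> by auto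
  next
    assume "adjugate (A 0) \<noteq> 0"
    then obtain k l where "adjugate (A 0) $ k $ l \<noteq> 0"
      by (auto simp: vec_eq_iff)
    then show "d = N"
      using at_0[of k l] \<open>N \<le> d\<close> by (cases "d = N") (auto simp: power_0_left)
  qed
  moreover have "det (A 0) = 0"
    using det[of 0] \<open>N \<le> d\<close> assms(3) by simp
  ultimately show ?thesis
    using \<open>c \<noteq> 0\<close> det rank_eq_card_minus_1_iff by blast
qed

end
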